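(* Let $0\le\sigma<1$, let $g(x)=\frac{\sin\log x}{\log x}$ for $0<x<1$, $g(0)=g(1)=0$, and $g_\sigma(x)=g(x)/x^\sigma$ for $0<x\le1$. There is a constant $C_\sigma$ depending only on $\sigma$ such that for all $\ell\ge1$, $$\Big|R_{g_\sigma}(\ell)-\int_0^1g_\sigma(t)\,dt\Big|\le\frac{C_\sigma}{\ell^{1-\sigma}},\qquad\text{where } R_{g_\sigma}(\ell)=\frac1\ell\sum_{k=1}^\ell g_\sigma\big(\tfrac k\ell\big).$$ Further, $\int_0^1g_\sigma(t)\,dt=\arctan\big(\frac{1}{1-\sigma}\big)$. *)

theory Defs
  imports "HOL-Analysis.Analysis"
begin

definition g :: "real \<Rightarrow> real" where
  "g x = (if 0 < x \<and> x < 1 then sin (ln x) / ln x else 0)"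

definition g_sigma :: "real \<Rightarrow> real \<Rightarrow> real" where
  "g_sigma \<sigma> x = g x / x powr \<sigma>"

definition riemann_sum :: "(real \<Rightarrow> real) \<Rightarrow> nat \<Rightarrow> real" where
  "riemann_sum f l = (1 / real l) * (\<Sum>k=1..l. f (real k / real l))"

end

theory Submission
  imports Defs
begin

(* Since sin L / L is the integral of cos (t L) over t in [0,1], g_sigma x is the t-integral of
   x^(-s) cos (t log x). On [e,1] x [0,1] this integrand is continuous, so the integrations can be
   swapped; the inner x-integral is elementary and equals (1-s)/((1-s)^2 + t^2) up to O(e^(1-s)),
   and the t-integral of the main term is arctan (1/(1-s)). Letting e -> 0 gives the integral.

   For the Riemann sum with mesh d = 1/l, the first cell costs O(d^(1-s)) since
   |g_sigma x| <= x^(-s), and the last one O(d) since g_sigma is bounded near 1 (where it jumps to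
   g 1 = 0). On the inner cells [k d, (k+1) d] the right-endpoint rule is the trapezoid rule plus a
   telescoping term, and the trapezoid error is d^3 times a bound for the second derivative of
   x^(-s) sinc (log x), which is O((k d)^(-s-2)); summing over k gives O(d^(1-s)). *)


section \<open>Derivatives of g_sigma on (0,1)\<close>

lemma abs_le_cube_if_deriv_le_square:
  fixes f f' :: "real \<Rightarrow> real"
  assumes "f 0 = 0"
    and "\<And>z. (f has_real_derivative f' z) (at z)"
    and "\<And>z. \<bar>f' z\<bar> \<le> z\<^sup>2"
  shows "\<bar>f y\<bar> \<le> \<bar>y\<bar> ^ 3"
proof -
  have "norm (f y - f 0) \<le> y\<^sup>2 * norm (y - 0)"
  proof (rule field_differentiable_bound[of "{-\<bar>y\<bar>..\<bar>y\<bar>}"])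
    fix z assume "z \<in> {-\<bar>y\<bar>..\<bar>y\<bar>}"
    then have "z\<^sup>2 \<le> y\<^sup>2"
      by (simp add: abs_le_square_iff[symmetric] abs_le_iff)
    then show "norm (f' z) \<le> y\<^sup>2"
      using assms(3)[of z] by simp
  qed (auto intro: has_field_derivative_at_within assms(2))
  then show ?thesis
    using assms(1) by (simp add: power3_eq_cube power2_eq_square abs_mult)
qed

text \<open>Only values at \<open>y \<noteq> 0\<close> matter (\<open>sinc 0 = 0\<close> is a junk value): the functions are
  evaluated at \<open>ln x\<close> for \<open>0 < x < 1\<close>.\<close>

definition sinc :: "real \<Rightarrow> real" where
  "sinc y = sin y / y"

definition sinc' :: "real \<Rightarrow> real" where
  "sinc' y = (y * cos y - sin y) / y\<^sup>2"

definition sinc'' :: "real \<Rightarrow> real" where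
  "sinc'' y = (2 * sin y - 2 * y * cos y - y\<^sup>2 * sin y) / y ^ 3"

lemma DERIV_sinc: "y \<noteq> 0 \<Longrightarrow> (sinc has_real_derivative sinc' y) (at y)"
  unfolding sinc_def[abs_def] sinc'_def
  by (auto intro!: derivative_eq_intros simp: field_simps power2_eq_square)

lemma DERIV_sinc': "y \<noteq> 0 \<Longrightarrow> (sinc' has_real_derivative sinc'' y) (at y)"
  unfolding sinc'_def[abs_def] sinc''_def
  by (auto intro!: derivative_eq_intros simp: field_simps power2_eq_square power3_eq_cube)

lemma abs_sinc_le: "\<bar>sinc y\<bar> \<le> 1"
  by (cases "y = 0") (auto simp: sinc_def abs_sin_x_le_abs_x divide_le_eq_1)

lemma abs_sinc'_numerator_le_cube: "\<bar>y * cos y - sin y\<bar> \<le> \<bar>y::real\<bar> ^ 3"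
proof (rule abs_le_cube_if_deriv_le_square[where f="\<lambda>y. y * cos y - sin y" and f'="\<lambda>y. - y * sin y"])
  fix z :: real
  show "((\<lambda>y. y * cos y - sin y) has_real_derivative - z * sin z) (at z)"
    by (auto intro!: derivative_eq_intros)
  have "\<bar>z\<bar> * \<bar>sin z\<bar> \<le> \<bar>z\<bar> * \<bar>z\<bar>"
    using abs_sin_x_le_abs_x[of z] by (rule mult_left_mono) simp
  then show "\<bar>- z * sin z\<bar> \<le> z\<^sup>2"
    by (simp add: abs_mult power2_eq_square)
qed simp

lemma abs_sinc''_numerator_le_cube:
  "\<bar>2 * sin y - 2 * y * cos y - y\<^sup>2 * sin y\<bar> \<le> \<bar>y::real\<bar> ^ 3"
proof (rule abs_le_cube_if_deriv_le_square
    [where f="\<lambda>y. 2 * sin y - 2 * y * cos y - y\<^sup>2 * sin y" and f'="\<lambda>y. - (y * y * cos y)"])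
  fix z :: real
  show "((\<lambda>y. 2 * sin y - 2 * y * cos y - y\<^sup>2 * sin y) has_real_derivative - (z * z * cos z)) (at z)"
    by (auto intro!: derivative_eq_intros simp: algebra_simps power2_eq_square)
  show "\<bar>- (z * z * cos z)\<bar> \<le> z\<^sup>2"
    by (auto simp: abs_mult power2_eq_square intro!: mult_left_le)
qed simp

lemma abs_sinc'_le: "\<bar>sinc' y\<bar> \<le> 2"
proof -
  have "\<bar>y * cos y - sin y\<bar> \<le> 2 * y\<^sup>2"
  proof (cases "\<bar>y\<bar> \<le> 1")
    case True
    then have "\<bar>y\<bar> ^ 3 \<le> \<bar>y\<bar>\<^sup>2"
      by (intro power_decreasing) auto
    then show ?thesis
      using abs_sinc'_numerator_le_cube[of y] by simp
  next
    case False
    have "\<bar>y * cos y - sin y\<bar> \<le> \<bar>y\<bar> + 1"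
      using abs_triangle_ineq4[of "y * cos y" "sin y"] abs_cos_le_one[of y] abs_sin_le_one[of y]
        mult_left_le[of "\<bar>cos y\<bar>" "\<bar>y\<bar>"]
      unfolding abs_mult by linarith
    also have "\<dots> \<le> 2 * \<bar>y\<bar> * \<bar>y\<bar>"
      using False mult_left_mono[of 1 "\<bar>y\<bar>" "\<bar>y\<bar>"] by linarith
    finally show ?thesis
      by (simp add: power2_eq_square abs_mult_self_eq mult.assoc)
  qed
  then show ?thesis
    by (cases "y = 0") (auto simp: sinc'_def abs_divide divide_le_eq)
qed

lemma abs_sinc''_le: "\<bar>sinc'' y\<bar> \<le> 1"
  using abs_sinc''_numerator_le_cube[of y]
  by (cases "y = 0") (auto simp: sinc''_def abs_divide divide_le_eq power_abs)

definition G :: "real \<Rightarrow> real \<Rightarrow> real" where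
  "G s x = x powr (-s) * sinc (ln x)"

definition G' :: "real \<Rightarrow> real \<Rightarrow> real" where
  "G' s x = x powr (-s - 1) * (sinc' (ln x) - s * sinc (ln x))"

definition G'' :: "real \<Rightarrow> real \<Rightarrow> real" where
  "G'' s x = x powr (-s - 2) * (sinc'' (ln x) - (2 * s + 1) * sinc' (ln x) + s * (s + 1) * sinc (ln x))"

lemma g_sigma_eq_G: "0 < x \<Longrightarrow> x < 1 \<Longrightarrow> g_sigma s x = G s x"
  unfolding g_sigma_def g_def G_def sinc_def by (simp add: powr_minus divide_inverse)

lemma DERIV_G:
  assumes "0 < x" "x < 1"
  shows "(G s has_real_derivative G' s x) (at x)"
proof -
  have "((\<lambda>x. x powr (-s) * sinc (ln x)) has_real_derivative
        (-s) * x powr (-s - 1) * sinc (ln x) + x powr (-s) * (sinc' (ln x) * (1 / x))) (at x)"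
    using assms by (auto intro!: derivative_eq_intros DERIV_chain2[OF DERIV_sinc])
  moreover have "(-s) * x powr (-s - 1) * sinc (ln x) + x powr (-s) * (sinc' (ln x) * (1 / x)) = G' s x"
    using assms unfolding G'_def by (simp add: powr_diff field_simps)
  ultimately show ?thesis
    unfolding G_def[abs_def] by simp
qed

lemma DERIV_G':
  assumes "0 < x" "x < 1"
  shows "(G' s has_real_derivative G'' s x) (at x)"
proof -
  have "((\<lambda>x. x powr (-s - 1) * (sinc' (ln x) - s * sinc (ln x))) has_real_derivative
        (-s - 1) * x powr (-s - 1 - 1) * (sinc' (ln x) - s * sinc (ln x))
          + x powr (-s - 1) * (sinc'' (ln x) * (1 / x) - s * (sinc' (ln x) * (1 / x)))) (at x)"
    using assms
    by (auto intro!: derivative_eq_intros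
        DERIV_chain2[OF DERIV_sinc] DERIV_chain2[OF DERIV_sinc'])
  moreover have "(-s - 1) * x powr (-s - 1 - 1) * (sinc' (ln x) - s * sinc (ln x))
          + x powr (-s - 1) * (sinc'' (ln x) * (1 / x) - s * (sinc' (ln x) * (1 / x))) = G'' s x"
    using assms unfolding G''_def
    by (simp add: powr_diff field_simps power2_eq_square eval_nat_numeral)
  ultimately show ?thesis
    unfolding G'_def[abs_def] by simp
qed

lemma abs_G''_le:
  assumes "0 < x" "0 \<le> s" "s < 1"
  shows "\<bar>G'' s x\<bar> \<le> 10 * x powr (-s - 2)"
proof -
  have "\<bar>sinc'' (ln x) - (2 * s + 1) * sinc' (ln x) + s * (s + 1) * sinc (ln x)\<bar>
      \<le> \<bar>sinc'' (ln x)\<bar> + (2 * s + 1) * \<bar>sinc' (ln x)\<bar> + s * (s + 1) * \<bar>sinc (ln x)\<bar>"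
    using assms
    by (auto simp: abs_mult intro!: order_trans[OF abs_triangle_ineq] order_trans[OF abs_triangle_ineq4])
  also have "\<dots> \<le> 1 + (2 * s + 1) * 2 + s * (s + 1) * 1"
    using assms abs_sinc_le abs_sinc'_le abs_sinc''_le by (intro add_mono mult_left_mono) auto
  also have "\<dots> \<le> 10"
    using assms mult_mono[of s 1 "s + 1" 2] by auto
  finally show ?thesis
    unfolding G''_def using assms by (simp add: abs_mult mult_left_mono mult.commute)
qed

lemma g_sigma_one: "g_sigma s 1 = 0"
  by (simp add: g_sigma_def g_def)

lemma abs_g_sigma_le:
  assumes "0 \<le> x"
  shows "\<bar>g_sigma s x\<bar> \<le> x powr (-s)"
proof (cases "0 < x \<and> x < 1")
  case True
  then show ?thesis
    using abs_sinc_le[of "ln x"] by (simp add: g_sigma_eq_G G_def abs_mult mult_left_le)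
qed (auto simp: g_sigma_def g_def)

lemma abs_g_sigma_le_2:
  assumes "1/2 \<le> x" "0 \<le> s" "s < 1"
  shows "\<bar>g_sigma s x\<bar> \<le> 2"
proof -
  have "x powr (-s) \<le> (1/2) powr (-s)"
    using assms by (intro powr_mono2') auto
  also have "\<dots> = 2 powr s"
    by (simp add: powr_minus_divide powr_divide)
  also have "\<dots> \<le> 2 powr 1"
    using assms by (intro powr_mono) auto
  finally show ?thesis
    using abs_g_sigma_le[of x s] assms by simp
qed

section \<open>The trapezoid rule\<close>

lemma abs_linear_remainder_le:
  fixes f f' f'' :: "real \<Rightarrow> real"
  assumes "a \<le> t"
    and df: "\<And>x. x \<in> {a..t} \<Longrightarrow> (f has_real_derivative f' x) (at x)"
    and ddf: "\<And>x. x \<in> {a..t} \<Longrightarrow> (f' has_real_derivative f'' x) (at x)"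
    and M: "\<And>x. x \<in> {a..t} \<Longrightarrow> \<bar>f'' x\<bar> \<le> M"
  shows "\<bar>f t - f a - (t - a) * f' t\<bar> \<le> M * (t - a)\<^sup>2"
proof (cases "a = t")
  case True
  then show ?thesis
    using M[of a] by simp
next
  case False
  then obtain \<xi> where \<xi>: "a < \<xi>" "\<xi> < t" "f t - f a = (t - a) * f' \<xi>"
    using MVT2[of a t f f'] df \<open>a \<le> t\<close> by force
  have "norm (f' \<xi> - f' t) \<le> M * norm (\<xi> - t)"
  proof (rule field_differentiable_bound[of "{a..t}"])
    show "(f' has_field_derivative f'' z) (at z within {a..t})" if "z \<in> {a..t}" for z
      using ddf[OF that] by (rule has_field_derivative_at_within)
  qed (use \<xi> M in auto)
  also have "\<dots> \<le> M * (t - a)"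
    using \<xi> M[of t] \<open>a \<le> t\<close> by (intro mult_left_mono) auto
  finally have "(t - a) * \<bar>f' \<xi> - f' t\<bar> \<le> (t - a) * (M * (t - a))"
    using \<open>a \<le> t\<close> by (intro mult_left_mono) auto
  moreover have "f t - f a - (t - a) * f' t = (t - a) * (f' \<xi> - f' t)"
    using \<xi>(3) by (simp add: algebra_simps)
  ultimately show ?thesis
    using \<open>a \<le> t\<close> by (simp add: abs_mult power2_eq_square mult_ac)
qed

lemma trapezoid_rule_error:
  fixes f f' f'' :: "real \<Rightarrow> real"
  assumes "a \<le> b"
    and df: "\<And>x. x \<in> {a..b} \<Longrightarrow> (f has_real_derivative f' x) (at x)"
    and ddf: "\<And>x. x \<in> {a..b} \<Longrightarrow> (f' has_real_derivative f'' x) (at x)"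
    and M: "\<And>x. x \<in> {a..b} \<Longrightarrow> \<bar>f'' x\<bar> \<le> M"
  shows "\<bar>integral {a..b} f - (b - a) * (f a + f b) / 2\<bar> \<le> M * (b - a) ^ 3 / 2"
proof -
  define F where "F t = integral {a..t} f - (t - a) * (f a + f t) / 2" for t
  define D where "D t = (f t - f a - (t - a) * f' t) / 2" for t
  have "continuous_on {a..b} f"
    using df by (meson DERIV_continuous continuous_at_imp_continuous_on)
  then have F': "(F has_field_derivative D t) (at t within {a..b})" if "t \<in> {a..b}" for t
    using integral_has_real_derivative[of a b f t] has_field_derivative_at_within[OF df[OF that]] that
    unfolding F_def D_def by (auto intro!: derivative_eq_intros simp: field_simps)
  have "norm (D t) \<le> M * (b - a)\<^sup>2 / 2" if t: "t \<in> {a..b}" for t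
  proof -
    have "\<bar>f t - f a - (t - a) * f' t\<bar> \<le> M * (t - a)\<^sup>2"
      using t by (intro abs_linear_remainder_le[where f''=f'']) (auto intro: df ddf M)
    also have "\<dots> \<le> M * (b - a)\<^sup>2"
      using t M[of t] by (intro mult_left_mono power_mono) auto
    finally show ?thesis
      by (simp add: D_def)
  qed
  then have "norm (F b - F a) \<le> M * (b - a)\<^sup>2 / 2 * norm (b - a)"
    using \<open>a \<le> b\<close> by (intro field_differentiable_bound[OF _ F']) auto
  then show ?thesis
    using \<open>a \<le> b\<close> by (simp add: F_def power3_eq_cube power2_eq_square algebra_simps)
qed

section \<open>The integral of g_sigma\<close>

lemma has_integral_cos_mult:
  assumes "L \<noteq> 0"
  shows "((\<lambda>t. cos (t * L)) has_integral sinc L) {0..1}"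
proof -
  have "((\<lambda>t. cos (t * L)) has_integral sin (1 * L) / L - sin (0 * L) / L) {0..1}"
  proof (rule fundamental_theorem_of_calculus)
    fix x :: real
    have "((\<lambda>t. sin (t * L) / L) has_real_derivative cos (x * L) * (1 * L) / L) (at x within {0..1})"
      by (auto intro!: derivative_eq_intros)
    then show "((\<lambda>t. sin (t * L) / L) has_vector_derivative cos (x * L)) (at x within {0..1})"
      using assms by (simp add: has_real_derivative_iff_has_vector_derivative)
  qed simp
  then show ?thesis
    by (simp add: sinc_def)
qed

text \<open>The real part of \<open>x powr (1 - s + i t) / (1 - s + i t)\<close>.\<close>

definition cos_log_antideriv :: "real \<Rightarrow> real \<Rightarrow> real \<Rightarrow> real" where
  "cos_log_antideriv s t x =
     x powr (1 - s) * ((1 - s) * cos (t * ln x) + t * sin (t * ln x)) / ((1 - s)\<^sup>2 + t\<^sup>2)"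

lemma continuous_on_cos_log_antideriv: "s < 1 \<Longrightarrow> continuous_on A (\<lambda>t. cos_log_antideriv s t x)"
  unfolding cos_log_antideriv_def by (intro continuous_intros) (auto simp: add_pos_nonneg)

lemma has_integral_cos_log:
  assumes "s < 1" "0 < e" "e \<le> 1"
  shows "((\<lambda>x. x powr (-s) * cos (t * ln x)) has_integral
           cos_log_antideriv s t 1 - cos_log_antideriv s t e) {e..1}"
proof (rule fundamental_theorem_of_calculus)
  fix x assume "x \<in> {e..1}"
  then have "0 < x"
    using assms by auto
  define P where "P = (1 - s)\<^sup>2 + t\<^sup>2"
  have "x powr (1 - s) = x * x powr (-s)"
    using \<open>0 < x\<close> by (simp add: powr_diff powr_minus divide_inverse)
  then have "((\<lambda>x. x powr (1 - s) * ((1 - s) * cos (t * ln x) + t * sin (t * ln x)))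
      has_real_derivative P * (x powr (-s) * cos (t * ln x))) (at x within {e..1})"
    using \<open>0 < x\<close> by (auto intro!: derivative_eq_intros simp: P_def field_simps power2_eq_square)
  then have "(cos_log_antideriv s t has_real_derivative P * (x powr (-s) * cos (t * ln x)) / P)
      (at x within {e..1})"
    unfolding cos_log_antideriv_def[abs_def] P_def[symmetric] by (rule DERIV_cdivide)
  moreover have "P \<noteq> 0"
    using assms by (simp add: P_def add_pos_nonneg)
  ultimately show "(cos_log_antideriv s t has_vector_derivative x powr (-s) * cos (t * ln x))
      (at x within {e..1})"
    by (simp add: has_real_derivative_iff_has_vector_derivative)
qed (use assms in auto)

lemma has_integral_arctan:
  assumes "0 < a"
  shows "((\<lambda>t. a / (a\<^sup>2 + t\<^sup>2)) has_integral arctan (1 / a)) {0..1}"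
proof -
  have "((\<lambda>t. a / (a\<^sup>2 + t\<^sup>2)) has_integral arctan (1 / a) - arctan (0 / a)) {0..1}"
  proof (rule fundamental_theorem_of_calculus)
    fix x :: real
    have "((\<lambda>t. arctan (t / a)) has_real_derivative inverse (1 + (x / a)\<^sup>2) * (1 / a)) (at x within {0..1})"
      using assms by (auto intro!: derivative_eq_intros)
    moreover have "inverse (1 + (x / a)\<^sup>2) * (1 / a) = a / (a\<^sup>2 + x\<^sup>2)"
      using assms by (simp add: field_simps power2_eq_square add_pos_nonneg)
    ultimately show "((\<lambda>t. arctan (t / a)) has_vector_derivative a / (a\<^sup>2 + x\<^sup>2)) (at x within {0..1})"
      by (simp add: has_real_derivative_iff_has_vector_derivative)
  qed simp
  then show ?thesis
    by simp
qed

lemma abs_cos_log_antideriv_le: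
  assumes "s < 1" "0 < e" "t \<in> {0..1}"
  shows "\<bar>cos_log_antideriv s t e\<bar> \<le> e powr (1 - s) * (2 - s) / (1 - s)\<^sup>2"
proof -
  define a where "a = 1 - s"
  have "0 < a"
    using assms by (simp add: a_def)
  have "\<bar>a * cos (t * ln e)\<bar> \<le> a"
    using \<open>0 < a\<close> by (simp add: abs_mult mult_left_le)
  moreover have "\<bar>t * sin (t * ln e)\<bar> \<le> 1"
    using assms mult_mono[of t 1 "\<bar>sin (t * ln e)\<bar>" 1] by (simp add: abs_mult)
  ultimately have "\<bar>a * cos (t * ln e) + t * sin (t * ln e)\<bar> / (a\<^sup>2 + t\<^sup>2) \<le> (a + 1) / a\<^sup>2"
    using \<open>0 < a\<close> by (intro frac_le) auto
  then have "e powr a * (\<bar>a * cos (t * ln e) + t * sin (t * ln e)\<bar> / (a\<^sup>2 + t\<^sup>2)) \<le> e powr a * ((a + 1) / a\<^sup>2)"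
    by (intro mult_left_mono) auto
  moreover have "a\<^sup>2 + t\<^sup>2 > 0"
    using \<open>0 < a\<close> by (simp add: add_pos_nonneg)
  moreover have "a + 1 = 2 - s"
    by (simp add: a_def)
  ultimately show ?thesis
    by (simp add: cos_log_antideriv_def a_def[symmetric] abs_mult abs_divide)
qed

lemma g_sigma_eq_integral_cos:
  assumes "0 < x" "x < 1"
  shows "g_sigma s x = integral {0..1} (\<lambda>t. x powr (-s) * cos (t * ln x))"
proof -
  have "((\<lambda>t. x powr (-s) * cos (t * ln x)) has_integral G s x) {0..1}"
    unfolding G_def using has_integral_cos_mult[of "ln x"] assms by (intro has_integral_mult_right) simp
  then show ?thesis
    unfolding g_sigma_eq_G[OF assms] by (rule integral_unique[symmetric])
qed

lemma integral_g_sigma_from_eq: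
  assumes "s < 1" "0 < e" "e < 1"
  shows "integral {e..1} (g_sigma s) = arctan (1 / (1 - s)) - integral {0..1} (\<lambda>t. cos_log_antideriv s t e)"
proof -
  define k where "k x t = x powr (-s) * cos (t * ln x)" for x t :: real
  have cont: "continuous_on (cbox (e, 0) (1, 1)) (\<lambda>(x, t). k x t)"
    unfolding k_def case_prod_beta using assms
    by (intro continuous_intros) (auto simp: cbox_Pair_eq less_eq_prod_def)
  have "integral {e..1} (\<lambda>x. integral {0..1} (k x)) = integral {0..1} (\<lambda>t. integral {e..1} (\<lambda>x. k x t))"
    using integral_swap_continuous[OF cont] by (simp add: box_real)
  moreover have "integral {e..1} (\<lambda>x. integral {0..1} (k x)) = integral {e..1} (g_sigma s)"
    by (rule integral_spike[of "{1}"]) (use assms in \<open>auto simp: k_def[abs_def] g_sigma_eq_integral_cos\<close>)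
  moreover have "integral {e..1} (\<lambda>x. k x t) = (1 - s) / ((1 - s)\<^sup>2 + t\<^sup>2) - cos_log_antideriv s t e" for t
    using has_integral_cos_log[of s e t] assms
    by (simp add: k_def integral_unique cos_log_antideriv_def)
  moreover have "(\<lambda>t. cos_log_antideriv s t e) integrable_on {0..1}"
    using assms by (intro integrable_continuous_interval continuous_on_cos_log_antideriv)
  ultimately show ?thesis
    using integral_unique[OF has_integral_arctan[of "1 - s"]]
    by (simp add: integral_diff has_integral_integrable[OF has_integral_arctan] assms)
qed

lemma abs_integral_g_sigma_from_minus_arctan_le:
  assumes "s < 1" "0 < e" "e < 1"
  shows "\<bar>integral {e..1} (g_sigma s) - arctan (1 / (1 - s))\<bar> \<le> e powr (1 - s) * (2 - s) / (1 - s)\<^sup>2"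
proof -
  have "norm (integral {0..1} (\<lambda>t. cos_log_antideriv s t e)) \<le> e powr (1 - s) * (2 - s) / (1 - s)\<^sup>2 * (1 - 0)"
    using assms abs_cos_log_antideriv_le
    by (intro integral_bound continuous_on_cos_log_antideriv) auto
  then show ?thesis
    using integral_g_sigma_from_eq[OF assms] by simp
qed

lemma g_sigma_measurable: "g_sigma s \<in> borel_measurable (lebesgue_on S)"
proof -
  have "g_sigma s \<in> borel_measurable borel"
    unfolding g_sigma_def[abs_def] g_def[abs_def] by measurable
  then have "g_sigma s \<in> borel_measurable lebesgue"
    by (simp add: measurable_completion)
  then show ?thesis
    by (rule measurable_restrict_space1)
qed

lemma g_sigma_integrable_on:
  assumes "s < 1"
  shows "g_sigma s integrable_on {0..1}"
  using assms abs_g_sigma_le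
  by (intro measurable_bounded_by_integrable_imp_integrable_real[OF g_sigma_measurable
        integrable_on_powr_from_0[of "-s" 1]]) auto

lemma abs_integral_g_sigma_le:
  assumes "s < 1" "0 \<le> e"
  shows "\<bar>integral {0..e} (g_sigma s)\<bar> \<le> e powr (1 - s) / (1 - s)"
  using integral_norm_bound_integral'[OF _ g_sigma_measurable _ has_integral_powr_from_0[of "-s" e]]
    assms abs_g_sigma_le
  by auto

lemma has_integral_g_sigma:
  assumes "s < 1"
  shows "(g_sigma s has_integral arctan (1 / (1 - s))) {0..1}"
proof -
  define I where "I = integral {0..1} (g_sigma s)"
  define K where "K = 1 / (1 - s) + (2 - s) / (1 - s)\<^sup>2"
  have "\<bar>I - arctan (1 / (1 - s))\<bar> \<le> e powr (1 - s) * K" if "0 < e" "e < 1" for e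
  proof -
    have "I = integral {0..e} (g_sigma s) + integral {e..1} (g_sigma s)"
      using Henstock_Kurzweil_Integration.integral_combine[of 0 e 1 "g_sigma s"]
        g_sigma_integrable_on[OF assms] that
      by (simp add: I_def)
    then have "\<bar>I - arctan (1 / (1 - s))\<bar>
        \<le> \<bar>integral {0..e} (g_sigma s)\<bar> + \<bar>integral {e..1} (g_sigma s) - arctan (1 / (1 - s))\<bar>"
      by simp
    also have "\<dots> \<le> e powr (1 - s) / (1 - s) + e powr (1 - s) * (2 - s) / (1 - s)\<^sup>2"
      using abs_integral_g_sigma_le abs_integral_g_sigma_from_minus_arctan_le assms that
      by (intro add_mono) auto
    finally show ?thesis
      by (simp add: K_def algebra_simps)
  qed
  then have "\<forall>\<^sub>F e in at_right 0. \<bar>I - arctan (1 / (1 - s))\<bar> \<le> e powr (1 - s) * K"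
    unfolding eventually_at_right[OF zero_less_one] by (intro exI[of _ 1]) auto
  moreover have "((\<lambda>e. e powr (1 - s) * K) \<longlongrightarrow> 0 * K) (at_right 0)"
    using assms by (intro tendsto_mult tendsto_const tendsto_zero_powrI tendsto_ident_at)
      (auto simp: eventually_at_right_less eventually_at_filter)
  ultimately have "\<bar>I - arctan (1 / (1 - s))\<bar> \<le> 0 * K"
    by (intro tendsto_le[OF _ _ tendsto_const]) auto
  then show ?thesis
    using g_sigma_integrable_on[OF assms] by (simp add: I_def has_integral_integral)
qed

section \<open>Riemann sums of g_sigma\<close>

lemma sum_inverse_squares_le_2: "(\<Sum>i=1..m. 1 / (real i)\<^sup>2) \<le> 2"
proof -
  have bound: "(\<Sum>i=1..m. 1 / (real i)\<^sup>2) \<le> 2 - 1 / real m" if "1 \<le> m" for m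
    using that
  proof (induction m rule: nat_induct_at_least)
    case (Suc m)
    have "1 / (real m + 1)\<^sup>2 + 1 / (real m + 1) \<le> 1 / real m"
      using Suc by (simp add: field_simps power2_eq_square add_pos_nonneg)
    then show ?case
      using Suc.IH by (simp add: add.commute)
  qed simp
  show ?thesis
  proof (cases "m = 0")
    case False
    then have "(\<Sum>i=1..m. 1 / (real i)\<^sup>2) \<le> 2 - 1 / real m"
      by (intro bound) simp
    moreover have "0 \<le> 1 / real m"
      by simp
    ultimately show ?thesis
      by linarith
  qed simp
qed

lemma integral_eq_sum_over_grid:
  fixes f :: "real \<Rightarrow> 'a::banach"
  assumes "f integrable_on {0..1}" "m \<le> l"
  shows "integral {0..real m / real l} f = (\<Sum>k<m. integral {real k / real l..real (Suc k) / real l} f)"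
  using assms(2)
proof (induction m)
  case (Suc m)
  have "f integrable_on {0..real (Suc m) / real l}"
    using integrable_subinterval_real[OF assms(1)] Suc.prems by (auto simp: divide_le_eq_1)
  then have "integral {0..real (Suc m) / real l} f
      = integral {0..real m / real l} f + integral {real m / real l..real (Suc m) / real l} f"
    using Henstock_Kurzweil_Integration.integral_combine[of 0 "real m / real l" "real (Suc m) / real l" f]
    by (simp add: divide_right_mono)
  then show ?case
    using Suc by simp
qed simp

lemma sum_split_first_last:
  fixes F :: "nat \<Rightarrow> 'a::comm_monoid_add"
  shows "(\<Sum>k<m + 2. F k) = F 0 + (\<Sum>k=1..m. F k) + F (Suc m)"
    and "(\<Sum>k=1..m + 2. F k) = F 1 + (\<Sum>k=1..m. F (Suc k)) + F (m + 2)"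
  by (induction m) (simp_all add: add_ac)

lemma riemann_sum_minus_integral_eq:
  fixes f :: "real \<Rightarrow> real" and m :: nat
  assumes "f integrable_on {0..1}"
  defines "d \<equiv> 1 / real (m + 2)"
  shows "riemann_sum f (m + 2) - integral {0..1} f =
      (d * f d - integral {0..d} f)
    + (\<Sum>k=1..m. d * (f (real k * d) + f (real (Suc k) * d)) / 2 - integral {real k * d..real (Suc k) * d} f)
    + d / 2 * (f (real (Suc m) * d) - f d)
    + (d * f 1 - integral {real (Suc m) * d..1} f)"
proof -
  define x where "x k = real k * d" for k
  have x: "x k = real k / real (m + 2)" for k
    by (simp add: x_def d_def)
  define I where "I k = integral {x k..x (Suc k)} f" for k
  have "integral {0..1} f = (\<Sum>k<m + 2. I k)"
    using integral_eq_sum_over_grid[OF assms(1), of "m + 2" "m + 2"] by (simp add: I_def x)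
  also have "\<dots> = I 0 + (\<Sum>k=1..m. I k) + I (Suc m)"
    by (rule sum_split_first_last)
  finally have integral: "integral {0..1} f = I 0 + (\<Sum>k=1..m. I k) + I (Suc m)" .
  have "riemann_sum f (m + 2) = (\<Sum>k=1..m + 2. d * f (x k))"
    by (simp only: riemann_sum_def sum_distrib_left x d_def)
  also have "\<dots> = d * f (x 1) + (\<Sum>k=1..m. d * f (x (Suc k))) + d * f (x (m + 2))"
    by (rule sum_split_first_last)
  also have "(\<Sum>k=1..m. d * f (x (Suc k)))
      = (\<Sum>k=1..m. d * (f (x k) + f (x (Suc k))) / 2) + d / 2 * (\<Sum>k=1..m. f (x (Suc k)) - f (x k))"
    unfolding sum_distrib_left sum.distrib[symmetric] by (intro sum.cong refl) (simp add: field_simps)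
  also have "(\<Sum>k=1..m. f (x (Suc k)) - f (x k)) = f (x (Suc m)) - f (x 1)"
    by (rule sum_Suc_diff) simp
  finally have riemann: "riemann_sum f (m + 2) = d * f (x 1)
      + ((\<Sum>k=1..m. d * (f (x k) + f (x (Suc k))) / 2) + d / 2 * (f (x (Suc m)) - f (x 1)))
      + d * f (x (m + 2))" .
  have "x 0 = 0" "x 1 = d" "x (m + 2) = 1"
    by (simp_all add: x_def d_def)
  then show ?thesis
    unfolding integral riemann by (simp add: I_def x_def sum_subtractf)
qed

lemma g_sigma_trapezoid_error:
  assumes "0 < u" "u \<le> v" "v < 1" "0 \<le> s" "s < 1"
  shows "\<bar>integral {u..v} (g_sigma s) - (v - u) * (g_sigma s u + g_sigma s v) / 2\<bar>
           \<le> 5 * u powr (-s - 2) * (v - u) ^ 3"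
proof -
  have "\<bar>integral {u..v} (G s) - (v - u) * (G s u + G s v) / 2\<bar> \<le> 10 * u powr (-s - 2) * (v - u) ^ 3 / 2"
  proof (rule trapezoid_rule_error[OF \<open>u \<le> v\<close>])
    fix x assume x: "x \<in> {u..v}"
    then have "0 < x" "x < 1"
      using assms by auto
    then show "(G s has_real_derivative G' s x) (at x)" "(G' s has_real_derivative G'' s x) (at x)"
      by (simp_all add: DERIV_G DERIV_G')
    have "\<bar>G'' s x\<bar> \<le> 10 * x powr (-s - 2)"
      using abs_G''_le \<open>0 < x\<close> assms by auto
    also have "\<dots> \<le> 10 * u powr (-s - 2)"
      using x assms by (intro mult_left_mono powr_mono2') auto
    finally show "\<bar>G'' s x\<bar> \<le> 10 * u powr (-s - 2)" .
  qed
  moreover have "integral {u..v} (g_sigma s) = integral {u..v} (G s)"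
    using assms by (intro integral_cong) (simp add: g_sigma_eq_G)
  ultimately show ?thesis
    using assms by (simp add: g_sigma_eq_G mult_ac)
qed

lemma sum_g_sigma_trapezoid_errors_le:
  assumes "0 \<le> s" "s < 1" "0 < d" "real (Suc m) * d < 1"
  shows "\<bar>\<Sum>k=1..m. d * (g_sigma s (real k * d) + g_sigma s (real (Suc k) * d)) / 2
             - integral {real k * d..real (Suc k) * d} (g_sigma s)\<bar> \<le> 10 * d powr (1 - s)"
proof -
  define E where "E k = d * (g_sigma s (real k * d) + g_sigma s (real (Suc k) * d)) / 2
                          - integral {real k * d..real (Suc k) * d} (g_sigma s)" for k
  have "\<bar>E k\<bar> \<le> 5 * d powr (1 - s) * (1 / (real k)\<^sup>2)" if k: "k \<in> {1..m}" for k
  proof -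
    have "real (Suc k) * d \<le> real (Suc m) * d"
      using k assms by (intro mult_right_mono) auto
    then have "real (Suc k) * d < 1"
      using assms by linarith
    moreover have "0 < real k * d" "real k * d \<le> real (Suc k) * d"
      using k assms by auto
    moreover have "real (Suc k) * d - real k * d = d"
      by (simp add: algebra_simps)
    ultimately have "\<bar>E k\<bar> \<le> 5 * (real k * d) powr (-s - 2) * d ^ 3"
      using g_sigma_trapezoid_error[of "real k * d" "real (Suc k) * d" s] assms
      by (simp add: E_def abs_minus_commute)
    also have "\<dots> = 5 * d powr (1 - s) * real k powr (-s - 2)"
    proof -
      have "(real k * d) powr (-s - 2) * d ^ 3 = real k powr (-s - 2) * (d powr (-s - 2) * d powr 3)"
        using assms by (simp add: powr_mult powr_realpow)
      also have "d powr (-s - 2) * d powr 3 = d powr (1 - s)"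
        by (simp add: powr_add[symmetric])
      finally show ?thesis
        by (simp add: mult_ac)
    qed
    also have "\<dots> \<le> 5 * d powr (1 - s) * (1 / (real k)\<^sup>2)"
    proof -
      have "real k powr (-s - 2) \<le> real k powr (-2)"
        using k assms by (intro powr_mono) auto
      also have "\<dots> = 1 / (real k)\<^sup>2"
        using k by (simp add: powr_minus_divide powr_realpow)
      finally show ?thesis
        by (intro mult_left_mono) auto
    qed
    finally show ?thesis .
  qed
  then have "\<bar>\<Sum>k=1..m. E k\<bar> \<le> 5 * d powr (1 - s) * (\<Sum>k=1..m. 1 / (real k)\<^sup>2)"
    unfolding sum_distrib_left by (intro order_trans[OF sum_abs sum_mono])
  also have "\<dots> \<le> 5 * d powr (1 - s) * 2"
    by (intro mult_left_mono sum_inverse_squares_le_2) auto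
  finally show ?thesis
    by (simp add: E_def)
qed

lemma g_sigma_first_cell_error:
  assumes "0 \<le> s" "s < 1" "0 < d"
  shows "\<bar>d * g_sigma s d - integral {0..d} (g_sigma s)\<bar> \<le> d powr (1 - s) + d powr (1 - s) / (1 - s)"
proof -
  have "\<bar>d * g_sigma s d\<bar> \<le> d * d powr (-s)"
    using abs_g_sigma_le[of d s] \<open>0 < d\<close> by (simp add: abs_mult)
  also have "\<dots> = d powr (1 - s)"
    using \<open>0 < d\<close> by (simp add: powr_mult_base)
  finally show ?thesis
    using abs_integral_g_sigma_le[of s d] assms
      abs_triangle_ineq4[of "d * g_sigma s d" "integral {0..d} (g_sigma s)"]
    by linarith
qed

lemma abs_integral_g_sigma_near_1_le:
  assumes "0 \<le> s" "s < 1" "1 / 2 \<le> a" "a \<le> 1"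
  shows "\<bar>integral {a..1} (g_sigma s)\<bar> \<le> 2 * (1 - a)"
proof -
  have "norm (integral {a..1} (g_sigma s)) \<le> integral {a..1} (\<lambda>_. 2)"
  proof (rule integral_norm_bound_integral)
    show "g_sigma s integrable_on {a..1}"
      by (rule integrable_subinterval_real[OF g_sigma_integrable_on[OF assms(2)]]) (use assms(3) in auto)
    fix x assume "x \<in> {a..1}"
    then have "1 / 2 \<le> x"
      using assms(3) by auto
    then show "norm (g_sigma s x) \<le> 2"
      using abs_g_sigma_le_2 assms(1,2) by simp
  qed (rule integrable_const_ivl)
  also have "integral {a..1} (\<lambda>_. 2) = 2 * (1 - a)"
    using assms(4) by simp
  finally show ?thesis
    by simp
qed

lemma riemann_sum_g_sigma_error_add_2:
  fixes m :: nat
  assumes "0 \<le> s" "s < 1"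
  defines "d \<equiv> 1 / real (m + 2)"
  shows "\<bar>riemann_sum (g_sigma s) (m + 2) - integral {0..1} (g_sigma s)\<bar> \<le> (15 + 1 / (1 - s)) * d powr (1 - s)"
proof -
  define D where "D = d powr (1 - s)"
  have "0 < d" "d \<le> 1 / 2"
    by (simp_all add: d_def divide_le_eq)
  have "1 / 2 \<le> real (Suc m) * d"
    by (simp add: d_def field_simps)
  have "real (Suc m) * d < 1"
    by (simp add: d_def field_simps)
  have dD: "d * d powr (-s) = D"
    using \<open>0 < d\<close> by (simp add: D_def powr_mult_base)
  have "d \<le> D"
    using powr_mono'[of "1 - s" 1 d] \<open>0 < d\<close> \<open>d \<le> 1 / 2\<close> assms by (simp add: D_def)
  have first: "\<bar>d * g_sigma s d - integral {0..d} (g_sigma s)\<bar> \<le> D + D / (1 - s)"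
    using g_sigma_first_cell_error[OF assms(1,2) \<open>0 < d\<close>] by (simp add: D_def)
  have telescope: "\<bar>d / 2 * (g_sigma s (real (Suc m) * d) - g_sigma s d)\<bar> \<le> 3 / 2 * D"
  proof -
    have "\<bar>g_sigma s (real (Suc m) * d) - g_sigma s d\<bar> \<le> 2 + d powr (-s)"
      using abs_g_sigma_le_2[OF \<open>1 / 2 \<le> real (Suc m) * d\<close> assms(1,2)] abs_g_sigma_le[of d s] \<open>0 < d\<close>
      by linarith
    then have "\<bar>d / 2 * (g_sigma s (real (Suc m) * d) - g_sigma s d)\<bar> \<le> d / 2 * (2 + d powr (-s))"
      using \<open>0 < d\<close> by (simp add: abs_mult)
    then show ?thesis
      using dD \<open>d \<le> D\<close> by (simp add: algebra_simps)
  qed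
  have "\<bar>integral {real (Suc m) * d..1} (g_sigma s)\<bar> \<le> 2 * (1 - real (Suc m) * d)"
    using \<open>1 / 2 \<le> real (Suc m) * d\<close> \<open>real (Suc m) * d < 1\<close> assms(1,2)
    by (intro abs_integral_g_sigma_near_1_le) auto
  also have "1 - real (Suc m) * d = d"
    by (simp add: d_def field_simps)
  finally have last: "\<bar>d * g_sigma s 1 - integral {real (Suc m) * d..1} (g_sigma s)\<bar> \<le> 2 * D"
    using \<open>d \<le> D\<close> by (simp add: g_sigma_one)
  have "\<bar>riemann_sum (g_sigma s) (m + 2) - integral {0..1} (g_sigma s)\<bar>
      \<le> (D + D / (1 - s)) + 10 * D + 3 / 2 * D + 2 * D"
    unfolding riemann_sum_minus_integral_eq[OF g_sigma_integrable_on[OF assms(2)], of m, folded d_def]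
    using first telescope last
      sum_g_sigma_trapezoid_errors_le[OF assms(1,2) \<open>0 < d\<close> \<open>real (Suc m) * d < 1\<close>]
    unfolding D_def by linarith
  also have "\<dots> \<le> (15 + 1 / (1 - s)) * D"
    using \<open>d \<le> D\<close> \<open>0 < d\<close> by (simp add: field_simps)
  finally show ?thesis
    by (simp add: D_def)
qed

lemma riemann_sum_g_sigma_error:
  assumes "0 \<le> s" "s < 1" "1 \<le> l"
  shows "\<bar>riemann_sum (g_sigma s) l - integral {0..1} (g_sigma s)\<bar> \<le> (15 + 1 / (1 - s)) / real l powr (1 - s)"
proof (cases "l = 1")
  case True
  then have "riemann_sum (g_sigma s) l = 0"
    by (simp add: riemann_sum_def g_sigma_one)
  moreover have "\<bar>integral {0..1} (g_sigma s)\<bar> \<le> 1 / (1 - s)"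
    using abs_integral_g_sigma_le[of s 1] assms by simp
  ultimately show ?thesis
    using True assms by simp
next
  case False
  then have "l = (l - 2) + 2"
    using assms by simp
  then show ?thesis
    using riemann_sum_g_sigma_error_add_2[OF assms(1,2), of "l - 2"] by (simp add: powr_divide)
qed

theorem lemma5p9:
  fixes \<sigma> :: real
  assumes "0 \<le> \<sigma>" and "\<sigma> < 1"
  shows "(\<exists>C. \<forall>l::nat. l \<ge> 1 \<longrightarrow>
            \<bar>riemann_sum (g_sigma \<sigma>) l - integral {0..1} (g_sigma \<sigma>)\<bar>
              \<le> C / real l powr (1 - \<sigma>))
         \<and> (g_sigma \<sigma> has_integral arctan (1 / (1 - \<sigma>))) {0..1}"
  using riemann_sum_g_sigma_error[OF assms] has_integral_g_sigma[OF assms(2)] by blast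

end
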